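(* The number of IP-SEG graphs on the labeled vertex set $\{1,\dots,n\}$ is at most $2^{O(n\log n)}$; more precisely, each IP-SEG graph on $n$ vertices can be encoded by assigning $O(\log n)$ bits to each vertex such that adjacency of two vertices is determined by their two labels alone (an implicit representation).
   Context: Let $L_1$ and $L_2$ be two distinct parallel horizontal lines in the plane. A closed straight line segment is an interval segment if both of its endpoints lie on the same line $L_i$, and a permutation segment if one endpoint lies on $L_1$ and the other on $L_2$. An IP-SEG model is a finite family of interval and permutation segments; its intersection graph has one vertex per segment, two vertices being adjacent iff the corresponding segments have nonempty intersection. A graph is an IP-SEG graph if it is isomorphic to the intersection graph of some IP-SEG model. *)

theory Defs
  imports "HOL-Analysis.Analysis"
begin

type_synonym pt = "real \<times> real"

definition seg_set :: "pt \<times> pt \<Rightarrow> pt set" where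
  "seg_set s = closed_segment (fst s) (snd s)"

definition is_interval_seg :: "real \<Rightarrow> real \<Rightarrow> pt \<times> pt \<Rightarrow> bool" where
  "is_interval_seg y1 y2 s \<longleftrightarrow> fst s \<noteq> snd s \<and>
     ((snd (fst s) = y1 \<and> snd (snd s) = y1) \<or> (snd (fst s) = y2 \<and> snd (snd s) = y2))"

definition is_perm_seg :: "real \<Rightarrow> real \<Rightarrow> pt \<times> pt \<Rightarrow> bool" where
  "is_perm_seg y1 y2 s \<longleftrightarrow>
     (snd (fst s) = y1 \<and> snd (snd s) = y2) \<or> (snd (fst s) = y2 \<and> snd (snd s) = y1)"

definition ipseg_model :: "real \<Rightarrow> real \<Rightarrow> 'i set \<Rightarrow> ('i \<Rightarrow> pt \<times> pt) \<Rightarrow> bool" where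
  "ipseg_model y1 y2 I s \<longleftrightarrow> y1 \<noteq> y2 \<and> finite I \<and>
     (\<forall>i\<in>I. is_interval_seg y1 y2 (s i) \<or> is_perm_seg y1 y2 (s i))"

definition intersection_graph :: "'i set \<Rightarrow> ('i \<Rightarrow> pt \<times> pt) \<Rightarrow> ('i \<times> 'i) set" where
  "intersection_graph I s = {(u, v). u \<in> I \<and> v \<in> I \<and> u \<noteq> v \<and> seg_set (s u) \<inter> seg_set (s v) \<noteq> {}}"

definition ipseg_graph_on :: "nat \<Rightarrow> (nat \<times> nat) set \<Rightarrow> bool" where
  "ipseg_graph_on n E \<longleftrightarrow>
     (\<exists>(I :: nat set) y1 y2 s f. ipseg_model y1 y2 I s \<and> bij_betw f {1..n} I \<and>
        E = {(u, v). u \<in> {1..n} \<and> v \<in> {1..n} \<and> (f u, f v) \<in> intersection_graph I s})"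

end

theory Submission
  imports Defs
begin

text \<open>Whether two segments of an IP-SEG model meet depends only on their types and on the
  relative order of the x-coordinates of their endpoints.  Replacing each x-coordinate by its
  rank among the at most \<open>2n\<close> endpoint coordinates therefore gives every vertex a descriptor
  of \<open>O(log n)\<close> bits (two for the kind, one rank per endpoint) from which adjacency can be
  decoded uniformly in \<open>n\<close>; counting the possible labellings bounds the number of IP-SEG
  graphs by \<open>2\<^bsup>O(n log n)\<^esup>\<close>.\<close>

section \<open>Segments between two horizontal lines\<close>

lemma mem_closed_segment_pair_iff:
  "((x::real), (y::real)) \<in> closed_segment (a, c) (b, d) \<longleftrightarrow>
     (\<exists>u. 0 \<le> u \<and> u \<le> 1 \<and> x = (1 - u) * a + u * b \<and> y = (1 - u) * c + u * d)"
  by (auto simp: closed_segment_def)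

definition weakly_between :: "'a::linorder \<Rightarrow> 'a \<Rightarrow> 'a \<Rightarrow> bool" where
  "weakly_between p q x \<longleftrightarrow> min p q \<le> x \<and> x \<le> max p q"

definition intervals_overlap :: "'a::linorder \<Rightarrow> 'a \<Rightarrow> 'a \<Rightarrow> 'a \<Rightarrow> bool" where
  "intervals_overlap p q p' q' \<longleftrightarrow> max (min p q) (min p' q') \<le> min (max p q) (max p' q')"

lemma intervals_overlap_iff_common_point:
  "intervals_overlap p q p' q' \<longleftrightarrow> (\<exists>x. weakly_between p q x \<and> weakly_between p' q' x)"
  unfolding intervals_overlap_def weakly_between_def
  by (auto intro: exI[of _ "max (min p q) (min p' q')"])

lemma mem_horizontal_segment_iff:
  "((x::real), (y::real)) \<in> closed_segment (a, c) (b, c) \<longleftrightarrow> y = c \<and> weakly_between a b x"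
proof -
  have "(x, y) \<in> closed_segment (a, c) (b, c) \<longleftrightarrow> y = c \<and> x \<in> closed_segment a b"
    by (auto simp: mem_closed_segment_pair_iff closed_segment_def algebra_simps)
  then show ?thesis by (auto simp: closed_segment_eq_real_ivl weakly_between_def)
qed

lemma convex_combination_eq_0_iff:
  "(\<exists>u. 0 \<le> u \<and> u \<le> 1 \<and> (1 - u) * \<alpha> + u * \<beta> = 0) \<longleftrightarrow>
     (\<alpha> \<le> 0 \<and> 0 \<le> \<beta>) \<or> (\<beta> \<le> 0 \<and> 0 \<le> (\<alpha>::real))"
proof
  assume "\<exists>u. 0 \<le> u \<and> u \<le> 1 \<and> (1 - u) * \<alpha> + u * \<beta> = 0"
  then obtain u where u: "0 \<le> u" "u \<le> 1" "(1 - u) * \<alpha> + u * \<beta> = 0" by blast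
  show "(\<alpha> \<le> 0 \<and> 0 \<le> \<beta>) \<or> (\<beta> \<le> 0 \<and> 0 \<le> \<alpha>)"
  proof (cases "u = 1")
    case True
    with u show ?thesis by auto
  next
    case False
    with u have "(1 - u) * \<alpha> > 0 \<longleftrightarrow> \<alpha> > 0" "(1 - u) * \<alpha> < 0 \<longleftrightarrow> \<alpha> < 0"
      by (simp_all add: zero_less_mult_iff mult_less_0_iff)
    moreover have "u * \<beta> \<ge> 0 \<or> \<beta> \<le> 0" "u * \<beta> \<le> 0 \<or> \<beta> \<ge> 0"
      using u by (auto simp: zero_le_mult_iff mult_le_0_iff)
    ultimately show ?thesis using u(3) by linarith
  qed
next
  assume signs: "(\<alpha> \<le> 0 \<and> 0 \<le> \<beta>) \<or> (\<beta> \<le> 0 \<and> 0 \<le> \<alpha>)"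
  show "\<exists>u. 0 \<le> u \<and> u \<le> 1 \<and> (1 - u) * \<alpha> + u * \<beta> = 0"
  proof (cases "\<alpha> = \<beta>")
    case True
    with signs show ?thesis by (intro exI[of _ 0]) auto
  next
    case False
    then have "(1 - \<alpha> / (\<alpha> - \<beta>)) * \<alpha> + \<alpha> / (\<alpha> - \<beta>) * \<beta> = 0"
      by (simp add: field_simps)
    moreover have "0 \<le> \<alpha> / (\<alpha> - \<beta>)" "\<alpha> / (\<alpha> - \<beta>) \<le> 1"
      using signs False by (auto simp: divide_simps)
    ultimately show ?thesis by blast
  qed
qed

lemma mem_cross_segment_on_first_line_iff:
  assumes "(y1::real) \<noteq> y2"
  shows "((x::real), y1) \<in> closed_segment (a, y1) (b, y2) \<longleftrightarrow> x = a"
proof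
  assume "(x, y1) \<in> closed_segment (a, y1) (b, y2)"
  then obtain u where u: "0 \<le> u" "x = (1 - u) * a + u * b" "u * (y2 - y1) = 0"
    unfolding mem_closed_segment_pair_iff by (auto simp: algebra_simps)
  with assms show "x = a" by simp
qed auto

lemma mem_cross_segment_on_second_line_iff:
  assumes "(y1::real) \<noteq> y2"
  shows "((x::real), y2) \<in> closed_segment (a, y1) (b, y2) \<longleftrightarrow> x = b"
  using mem_cross_segment_on_first_line_iff[of y2 y1 x b a] assms
  by (simp add: closed_segment_commute)

lemma cross_segments_meet_iff:
  assumes "(y1::real) \<noteq> y2"
  shows "closed_segment (a, y1) (b, y2) \<inter> closed_segment (a', y1) (b', y2) \<noteq> {} \<longleftrightarrow>
     (a \<le> a' \<and> b' \<le> b) \<or> (a' \<le> a \<and> b \<le> (b'::real))"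
proof -
  have "closed_segment (a, y1) (b, y2) \<inter> closed_segment (a', y1) (b', y2) \<noteq> {} \<longleftrightarrow>
      (\<exists>u. 0 \<le> u \<and> u \<le> 1 \<and> (1 - u) * (a - a') + u * (b - b') = 0)"
  proof
    assume "closed_segment (a, y1) (b, y2) \<inter> closed_segment (a', y1) (b', y2) \<noteq> {}"
    then obtain u v where uv: "0 \<le> u" "u \<le> 1"
      "(1 - u) * a + u * b = (1 - v) * a' + v * b'" "(1 - u) * y1 + u * y2 = (1 - v) * y1 + v * y2"
      by (auto simp: mem_closed_segment_pair_iff)
    from uv(4) have "(u - v) * (y2 - y1) = 0" by (simp add: algebra_simps)
    with assms have "u = v" by simp
    with uv show "\<exists>u. 0 \<le> u \<and> u \<le> 1 \<and> (1 - u) * (a - a') + u * (b - b') = 0"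
      by (auto simp: algebra_simps)
  next
    assume "\<exists>u. 0 \<le> u \<and> u \<le> 1 \<and> (1 - u) * (a - a') + u * (b - b') = 0"
    then obtain u where u: "0 \<le> u" "u \<le> 1" "(1 - u) * a + u * b = (1 - u) * a' + u * b'"
      by (auto simp: algebra_simps)
    then have "((1 - u) * a + u * b, (1 - u) * y1 + u * y2) \<in>
        closed_segment (a, y1) (b, y2) \<inter> closed_segment (a', y1) (b', y2)"
      by (auto simp: mem_closed_segment_pair_iff)
    then show "closed_segment (a, y1) (b, y2) \<inter> closed_segment (a', y1) (b', y2) \<noteq> {}" by blast
  qed
  also have "\<dots> \<longleftrightarrow> (a \<le> a' \<and> b' \<le> b) \<or> (a' \<le> a \<and> b \<le> b')"
    by (auto simp: convex_combination_eq_0_iff)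
  finally show ?thesis .
qed

section \<open>Segment descriptors\<close>

datatype seg_kind = Interval1 | Interval2 | Perm

text \<open>A descriptor \<open>(k, p, q)\<close> records the kind of a segment and the x-coordinates of its
  endpoints; for a permutation segment \<open>p\<close> is the endpoint on \<open>L\<^sub>1\<close> and \<open>q\<close> the one on \<open>L\<^sub>2\<close>.\<close>

type_synonym 'a descr = "seg_kind \<times> 'a \<times> 'a"

fun realise_descr :: "real \<Rightarrow> real \<Rightarrow> real descr \<Rightarrow> pt set" where
  "realise_descr y1 y2 (Interval1, p, q) = closed_segment (p, y1) (q, y1)"
| "realise_descr y1 y2 (Interval2, p, q) = closed_segment (p, y2) (q, y2)"
| "realise_descr y1 y2 (Perm, p, q) = closed_segment (p, y1) (q, y2)"

definition descr_of :: "real \<Rightarrow> real \<Rightarrow> pt \<times> pt \<Rightarrow> real descr" where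
  "descr_of y1 y2 s =
     (let ((a, ya), (b, yb)) = s in
      if ya = y1 \<and> yb = y1 then (Interval1, a, b)
      else if ya = y2 \<and> yb = y2 then (Interval2, a, b)
      else if ya = y1 then (Perm, a, b) else (Perm, b, a))"

lemma descr_of_seg:
  assumes "y1 \<noteq> y2" "is_interval_seg y1 y2 s \<or> is_perm_seg y1 y2 s"
  shows "seg_set s = realise_descr y1 y2 (descr_of y1 y2 s)"
    and "fst (snd (descr_of y1 y2 s)) \<in> {fst (fst s), fst (snd s)}"
    and "snd (snd (descr_of y1 y2 s)) \<in> {fst (fst s), fst (snd s)}"
proof -
  obtain a ya b yb where s: "s = ((a, ya), (b, yb))" by (metis prod.collapse)
  show "seg_set s = realise_descr y1 y2 (descr_of y1 y2 s)"
    and "fst (snd (descr_of y1 y2 s)) \<in> {fst (fst s), fst (snd s)}"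
    and "snd (snd (descr_of y1 y2 s)) \<in> {fst (fst s), fst (snd s)}"
    using assms
    by (auto simp: s descr_of_def seg_set_def is_interval_seg_def is_perm_seg_def
        closed_segment_commute)
qed

fun descrs_meet :: "'a::linorder descr \<Rightarrow> 'a descr \<Rightarrow> bool" where
  "descrs_meet (Interval1, p, q) (Interval1, p', q') = intervals_overlap p q p' q'"
| "descrs_meet (Interval2, p, q) (Interval2, p', q') = intervals_overlap p q p' q'"
| "descrs_meet (Perm, p, q) (Perm, p', q') = ((p \<le> p' \<and> q' \<le> q) \<or> (p' \<le> p \<and> q \<le> q'))"
| "descrs_meet (Interval1, p, q) (Perm, p', q') = weakly_between p q p'"
| "descrs_meet (Perm, p, q) (Interval1, p', q') = weakly_between p' q' p"
| "descrs_meet (Interval2, p, q) (Perm, p', q') = weakly_between p q q'"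
| "descrs_meet (Perm, p, q) (Interval2, p', q') = weakly_between p' q' q"
| "descrs_meet (Interval1, _) (Interval2, _) = False"
| "descrs_meet (Interval2, _) (Interval1, _) = False"

lemma realise_descr_inter_nonempty_iff:
  assumes "y1 \<noteq> y2"
  shows "realise_descr y1 y2 d \<inter> realise_descr y1 y2 d' \<noteq> {} \<longleftrightarrow> descrs_meet d d'"
proof -
  have ne: "A \<inter> B \<noteq> {} \<longleftrightarrow> (\<exists>x y. (x, y) \<in> A \<and> (x, y) \<in> B)" for A B :: "pt set"
    by auto
  obtain k p q k' p' q' where d: "d = (k, p, q)" "d' = (k', p', q')"
    by (metis prod.collapse)
  show ?thesis
    unfolding d using assms
    by (cases k; cases k'; simp add: cross_segments_meet_iff;
        auto simp: ne mem_horizontal_segment_iff mem_cross_segment_on_first_line_iff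
          mem_cross_segment_on_second_line_iff intervals_overlap_iff_common_point)
qed

definition map_descr :: "('a \<Rightarrow> 'b) \<Rightarrow> 'a descr \<Rightarrow> 'b descr" where
  "map_descr g = apsnd (map_prod g g)"

lemma descrs_meet_map_descr:
  assumes "\<And>x y. x \<in> X \<Longrightarrow> y \<in> X \<Longrightarrow> g x \<le> g y \<longleftrightarrow> x \<le> y"
    and "fst (snd d) \<in> X \<and> snd (snd d) \<in> X" "fst (snd d') \<in> X \<and> snd (snd d') \<in> X"
  shows "descrs_meet (map_descr g d) (map_descr g d') = descrs_meet d d'"
proof -
  obtain k p q k' p' q' where "d = (k, p, q)" "d' = (k', p', q')"
    by (metis prod.collapse)
  with assms show ?thesis
    by (cases k; cases k')
      (auto simp: map_descr_def intervals_overlap_def weakly_between_def min_def max_def)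
qed

section \<open>From models to descriptors with small integer coordinates\<close>

lemma ipseg_graph_on_edges_subset:
  assumes "ipseg_graph_on n E"
  shows "E \<subseteq> {(u, v). u \<in> {1..n} \<and> v \<in> {1..n} \<and> u \<noteq> v}"
  using assms unfolding ipseg_graph_on_def intersection_graph_def by auto

lemma ipseg_graph_on_real_descrs:
  assumes "ipseg_graph_on n E"
  obtains X :: "real set" and d :: "nat \<Rightarrow> real descr"
  where "finite X" "card X \<le> 2 * n"
    and "\<And>v. v \<in> {1..n} \<Longrightarrow> fst (snd (d v)) \<in> X \<and> snd (snd (d v)) \<in> X"
    and "\<And>u v. u \<in> {1..n} \<Longrightarrow> v \<in> {1..n} \<Longrightarrow> u \<noteq> v \<Longrightarrow>
           (u, v) \<in> E \<longleftrightarrow> descrs_meet (d u) (d v)"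
proof -
  obtain I :: "nat set" and y1 y2 s f where model: "ipseg_model y1 y2 I s"
    and bij: "bij_betw f {1..n} I"
    and E: "E = {(u, v). u \<in> {1..n} \<and> v \<in> {1..n} \<and> (f u, f v) \<in> intersection_graph I s}"
    using assms unfolding ipseg_graph_on_def by blast
  have y12: "y1 \<noteq> y2" and "finite I"
    and seg: "\<And>i. i \<in> I \<Longrightarrow> is_interval_seg y1 y2 (s i) \<or> is_perm_seg y1 y2 (s i)"
    using model unfolding ipseg_model_def by auto
  have "card I = n" using bij_betw_same_card[OF bij] by simp
  have fI: "f v \<in> I" if "v \<in> {1..n}" for v
    using bij that by (auto simp: bij_betw_def)
  define X where "X = (\<lambda>i. fst (fst (s i))) ` I \<union> (\<lambda>i. fst (snd (s i))) ` I"
  define d where "d v = descr_of y1 y2 (s (f v))" for v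
  show thesis
  proof
    show "finite X" unfolding X_def using \<open>finite I\<close> by simp
    have "card X \<le> card ((\<lambda>i. fst (fst (s i))) ` I) + card ((\<lambda>i. fst (snd (s i))) ` I)"
      unfolding X_def by (rule card_Un_le)
    also have "\<dots> \<le> card I + card I"
      by (intro add_mono card_image_le \<open>finite I\<close>)
    finally show "card X \<le> 2 * n" using \<open>card I = n\<close> by simp
    show "fst (snd (d v)) \<in> X \<and> snd (snd (d v)) \<in> X" if "v \<in> {1..n}" for v
      using descr_of_seg(2,3)[OF y12 seg[OF fI[OF that]]] fI[OF that]
      unfolding d_def X_def by blast
    show "(u, v) \<in> E \<longleftrightarrow> descrs_meet (d u) (d v)"
      if "u \<in> {1..n}" "v \<in> {1..n}" "u \<noteq> v" for u v
    proof -
      have "f u \<noteq> f v" using inj_on_contraD[OF bij_betw_imp_inj_on[OF bij] that(3,1,2)] .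
      with that have "(u, v) \<in> E \<longleftrightarrow> seg_set (s (f u)) \<inter> seg_set (s (f v)) \<noteq> {}"
        unfolding E intersection_graph_def by (simp add: fI)
      also have "\<dots> \<longleftrightarrow> realise_descr y1 y2 (d u) \<inter> realise_descr y1 y2 (d v) \<noteq> {}"
        using descr_of_seg(1)[OF y12 seg[OF fI[OF that(1)]]]
          descr_of_seg(1)[OF y12 seg[OF fI[OF that(2)]]]
        unfolding d_def by simp
      finally show ?thesis using realise_descr_inter_nonempty_iff[OF y12] by simp
    qed
  qed
qed

lemma finite_order_embedding_into_nat:
  fixes X :: "'a::linorder set"
  assumes "finite X"
  obtains r :: "'a \<Rightarrow> nat"
  where "\<And>x y. x \<in> X \<Longrightarrow> y \<in> X \<Longrightarrow> r x \<le> r y \<longleftrightarrow> x \<le> y"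
    and "\<And>x. x \<in> X \<Longrightarrow> r x < card X"
proof -
  define r where "r x = card {z \<in> X. z < x}" for x
  have less: "r x < r y" if "x \<in> X" "y \<in> X" "x < y" for x y
  proof -
    have "{z \<in> X. z < x} \<subset> {z \<in> X. z < y}" using that by auto
    then show ?thesis unfolding r_def by (rule psubset_card_mono[rotated]) (simp add: assms)
  qed
  show thesis
  proof
    show "r x \<le> r y \<longleftrightarrow> x \<le> y" if "x \<in> X" "y \<in> X" for x y
      using less[OF that] less[OF that(2,1)]
      by (metis linorder_not_le order.order_iff_strict order.strict_implies_order)
    show "r x < card X" if "x \<in> X" for x
    proof -
      have "{z \<in> X. z < x} \<subset> X" using that by auto
      then show ?thesis unfolding r_def by (rule psubset_card_mono[rotated]) (rule assms)
    qed
  qed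
qed

lemma ipseg_graph_on_nat_descrs:
  assumes "ipseg_graph_on n E"
  obtains d :: "nat \<Rightarrow> nat descr"
  where "\<And>v. v \<in> {1..n} \<Longrightarrow> fst (snd (d v)) < 2 * n \<and> snd (snd (d v)) < 2 * n"
    and "\<And>u v. u \<in> {1..n} \<Longrightarrow> v \<in> {1..n} \<Longrightarrow> u \<noteq> v \<Longrightarrow>
           (u, v) \<in> E \<longleftrightarrow> descrs_meet (d u) (d v)"
proof -
  obtain X and d :: "nat \<Rightarrow> real descr" where "finite X" "card X \<le> 2 * n"
    and endpoints: "\<And>v. v \<in> {1..n} \<Longrightarrow> fst (snd (d v)) \<in> X \<and> snd (snd (d v)) \<in> X"
    and adj: "\<And>u v. u \<in> {1..n} \<Longrightarrow> v \<in> {1..n} \<Longrightarrow> u \<noteq> v \<Longrightarrow>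
                (u, v) \<in> E \<longleftrightarrow> descrs_meet (d u) (d v)"
    using ipseg_graph_on_real_descrs[OF assms] by blast
  obtain r where r_le: "\<And>x y. x \<in> X \<Longrightarrow> y \<in> X \<Longrightarrow> r x \<le> r y \<longleftrightarrow> x \<le> y"
    and r_less: "\<And>x. x \<in> X \<Longrightarrow> r x < card X"
    using finite_order_embedding_into_nat[OF \<open>finite X\<close>] by blast
  show thesis
  proof
    show "fst (snd (map_descr r (d v))) < 2 * n \<and> snd (snd (map_descr r (d v))) < 2 * n"
      if "v \<in> {1..n}" for v
      using r_less endpoints[OF that] \<open>card X \<le> 2 * n\<close>
      by (cases "d v") (auto simp: map_descr_def intro: order.strict_trans2)
    show "(u, v) \<in> E \<longleftrightarrow> descrs_meet (map_descr r (d u)) (map_descr r (d v))"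
      if "u \<in> {1..n}" "v \<in> {1..n}" "u \<noteq> v" for u v
      using adj[OF that]
        descrs_meet_map_descr[of X r, OF r_le endpoints[OF that(1)] endpoints[OF that(2)]]
      by simp
  qed
qed

section \<open>Encoding descriptors as bit strings\<close>

definition bits :: "nat \<Rightarrow> nat \<Rightarrow> bool list" where
  "bits w k = map (bit k) [0..<w]"

abbreviation nat_of_bits :: "bool list \<Rightarrow> nat" where
  "nat_of_bits \<equiv> horner_sum of_bool 2"

lemma length_bits [simp]: "length (bits w k) = w"
  by (simp add: bits_def)

lemma nat_of_bits_bits: "k < 2 ^ w \<Longrightarrow> nat_of_bits (bits w k) = k"
  by (simp add: bits_def horner_sum_bit_eq_take_bit take_bit_nat_eq_self_iff)

fun kind_bits :: "seg_kind \<Rightarrow> bool list" where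
  "kind_bits Interval1 = [False, False]"
| "kind_bits Interval2 = [True, False]"
| "kind_bits Perm = [False, True]"

fun kind_of_bits :: "bool list \<Rightarrow> seg_kind" where
  "kind_of_bits [True, False] = Interval2"
| "kind_of_bits [False, True] = Perm"
| "kind_of_bits _ = Interval1"

lemma kind_of_bits_kind_bits [simp]: "kind_of_bits (kind_bits k) = k"
  by (cases k) simp_all

lemma length_kind_bits [simp]: "length (kind_bits k) = 2"
  by (cases k) simp_all

fun encode_descr :: "nat \<Rightarrow> nat descr \<Rightarrow> bool list" where
  "encode_descr w (k, p, q) = kind_bits k @ bits w p @ bits w q"

text \<open>The width \<open>w\<close> is read off the length \<open>2 + 2w\<close> of the label, so a single decoder serves
  every \<open>n\<close>.\<close>

definition decode_descr :: "bool list \<Rightarrow> nat descr" where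
  "decode_descr bs = (let w = (length bs - 2) div 2 in
     (kind_of_bits (take 2 bs), nat_of_bits (take w (drop 2 bs)), nat_of_bits (drop (2 + w) bs)))"

lemma length_encode_descr: "length (encode_descr w d) = 2 + 2 * w"
  by (cases d) simp

lemma decode_descr_encode_descr:
  assumes "p < 2 ^ w" "q < 2 ^ w"
  shows "decode_descr (encode_descr w (k, p, q)) = (k, p, q)"
  using assms by (simp add: decode_descr_def nat_of_bits_bits)

section \<open>Implicit representation and counting\<close>

definition ipseg_adjacent :: "bool list \<Rightarrow> bool list \<Rightarrow> bool" where
  "ipseg_adjacent a b \<longleftrightarrow> descrs_meet (decode_descr a) (decode_descr b)"

definition code_width :: "nat \<Rightarrow> nat" where
  "code_width n = nat \<lceil>log 2 (real n + 1)\<rceil> + 1"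

lemma double_less_two_pow_code_width: "2 * n < 2 ^ code_width n"
proof -
  have "real n + 1 = 2 powr log 2 (real n + 1)" by simp
  also have "\<dots> \<le> 2 powr real (nat \<lceil>log 2 (real n + 1)\<rceil>)" by (intro powr_mono) auto
  also have "\<dots> = 2 ^ nat \<lceil>log 2 (real n + 1)\<rceil>" by (rule powr_realpow) simp
  finally have "real (n + 1) \<le> real ((2::nat) ^ nat \<lceil>log 2 (real n + 1)\<rceil>)" by simp
  then have "n + 1 \<le> 2 ^ nat \<lceil>log 2 (real n + 1)\<rceil>" by (simp only: of_nat_le_iff)
  then show ?thesis unfolding code_width_def by simp
qed

lemma label_length_le_log:
  assumes "n \<ge> 1"
  shows "real (2 + 2 * code_width n) \<le> 8 * log 2 (real n + 1)"
proof -
  have "log 2 (real n + 1) \<ge> 1" using assms by simp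
  moreover have "real (code_width n) \<le> log 2 (real n + 1) + 2"
    unfolding code_width_def by (simp add: of_nat_nat) linarith
  ultimately show ?thesis by (simp only: of_nat_add of_nat_mult of_nat_numeral)
qed

lemma ipseg_graph_on_implicit_representation:
  assumes "ipseg_graph_on n E"
  shows "\<exists>lab. (\<forall>v\<in>{1..n}. length (lab v) = 2 + 2 * code_width n) \<and>
    (\<forall>u\<in>{1..n}. \<forall>v\<in>{1..n}. u \<noteq> v \<longrightarrow> ((u, v) \<in> E \<longleftrightarrow> ipseg_adjacent (lab u) (lab v)))"
proof -
  obtain d :: "nat \<Rightarrow> nat descr"
    where small: "\<And>v. v \<in> {1..n} \<Longrightarrow> fst (snd (d v)) < 2 * n \<and> snd (snd (d v)) < 2 * n"
    and adj: "\<And>u v. u \<in> {1..n} \<Longrightarrow> v \<in> {1..n} \<Longrightarrow> u \<noteq> v \<Longrightarrow>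
                (u, v) \<in> E \<longleftrightarrow> descrs_meet (d u) (d v)"
    using ipseg_graph_on_nat_descrs[OF assms] by blast
  have decode_label: "decode_descr (encode_descr (code_width n) (d v)) = d v"
    if "v \<in> {1..n}" for v
    using small[OF that] double_less_two_pow_code_width[of n] decode_descr_encode_descr
    by (cases "d v") (metis fst_conv snd_conv order.strict_trans)
  show ?thesis
    using adj decode_label length_encode_descr
    by (intro exI[of _ "\<lambda>v. encode_descr (code_width n) (d v)"]) (simp add: ipseg_adjacent_def)
qed

lemma card_implicitly_represented_graphs_le:
  fixes D :: "bool list \<Rightarrow> bool list \<Rightarrow> bool"
  assumes "finite V"
    and subset: "\<And>E. P E \<Longrightarrow> E \<subseteq> {(u, v). u \<in> V \<and> v \<in> V \<and> u \<noteq> v}"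
    and labels: "\<And>E. P E \<Longrightarrow> \<exists>lab. (\<forall>v\<in>V. length (lab v) = L) \<and>
           (\<forall>u\<in>V. \<forall>v\<in>V. u \<noteq> v \<longrightarrow> ((u, v) \<in> E \<longleftrightarrow> D (lab u) (lab v)))"
  shows "card {E. P E} \<le> 2 ^ (L * card V)"
proof -
  define good where "good E lab \<longleftrightarrow> (\<forall>v\<in>V. length (lab v) = L) \<and>
     (\<forall>u\<in>V. \<forall>v\<in>V. u \<noteq> v \<longrightarrow> ((u, v) \<in> E \<longleftrightarrow> D (lab u) (lab v)))" for E lab
  define lab_of where "lab_of E = (SOME lab. good E lab)" for E
  have good: "good E (lab_of E)" if "P E" for E
    using labels[OF that] unfolding lab_of_def good_def[symmetric] by (rule someI_ex)
  have edges: "E = {(u, v). u \<in> V \<and> v \<in> V \<and> u \<noteq> v \<and> D (lab_of E u) (lab_of E v)}"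
    if "P E" for E
    using good[OF that] subset[OF that] unfolding good_def by auto
  define T where "T = (\<Pi>\<^sub>E v\<in>V. {xs :: bool list. length xs = L})"
  have "inj_on (\<lambda>E. restrict (lab_of E) V) {E. P E}"
  proof (rule inj_onI)
    fix E E'
    assume "E \<in> {E. P E}" "E' \<in> {E. P E}" "restrict (lab_of E) V = restrict (lab_of E') V"
    then have "\<forall>v\<in>V. lab_of E v = lab_of E' v" by (metis restrict_apply')
    then have "{(u, v). u \<in> V \<and> v \<in> V \<and> u \<noteq> v \<and> D (lab_of E u) (lab_of E v)} =
        {(u, v). u \<in> V \<and> v \<in> V \<and> u \<noteq> v \<and> D (lab_of E' u) (lab_of E' v)}"
      by auto
    with \<open>E \<in> {E. P E}\<close> \<open>E' \<in> {E. P E}\<close> show "E = E'" using edges[of E] edges[of E'] by simp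
  qed
  moreover have "(\<lambda>E. restrict (lab_of E) V) ` {E. P E} \<subseteq> T"
    using good unfolding T_def good_def by auto
  moreover have "finite T"
    unfolding T_def using assms(1) finite_lists_length_eq[of "UNIV :: bool set" L]
    by (intro finite_PiE) auto
  ultimately have "card {E. P E} \<le> card T" by (intro card_inj_on_le)
  also have "card T = (2 ^ L) ^ card V"
    unfolding T_def using card_lists_length_eq[of "UNIV :: bool set" L] assms(1)
    by (simp add: card_PiE card_UNIV_bool)
  finally show ?thesis by (simp add: power_mult)
qed

theorem mainTheorem2:
  shows "\<exists>c::real. c > 0 \<and>
    (\<forall>n::nat. real (card {E. ipseg_graph_on n E}) \<le> 2 powr (c * real n * log 2 (real n + 1))) \<and>
    (\<exists>D :: bool list \<Rightarrow> bool list \<Rightarrow> bool. \<forall>n E. ipseg_graph_on n E \<longrightarrow>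
       (\<exists>lab :: nat \<Rightarrow> bool list.
          (\<forall>v\<in>{1..n}. real (length (lab v)) \<le> c * log 2 (real n + 1)) \<and>
          (\<forall>u\<in>{1..n}. \<forall>v\<in>{1..n}. u \<noteq> v \<longrightarrow> ((u, v) \<in> E \<longleftrightarrow> D (lab u) (lab v)))))"
proof (intro exI[of _ 8] conjI allI impI exI[of _ ipseg_adjacent])
  fix n :: nat
  let ?L = "2 + 2 * code_width n"
  have "card {E. ipseg_graph_on n E} \<le> 2 ^ (?L * card {1..n})"
    by (rule card_implicitly_represented_graphs_le[OF finite_atLeastAtMost
          ipseg_graph_on_edges_subset ipseg_graph_on_implicit_representation])
  then have "real (card {E. ipseg_graph_on n E}) \<le> real ((2::nat) ^ (?L * n))"
    by (simp only: card_atLeastAtMost diff_Suc_1 of_nat_le_iff)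
  also have "\<dots> = 2 powr (real ?L * real n)"
    by (simp add: powr_realpow[symmetric] algebra_simps)
  also have "\<dots> \<le> 2 powr (8 * real n * log 2 (real n + 1))"
    using label_length_le_log[of n] by (cases "n = 0") (auto intro!: powr_mono mult_right_mono)
  finally show "real (card {E. ipseg_graph_on n E}) \<le> 2 powr (8 * real n * log 2 (real n + 1))" .
next
  fix n E
  assume "ipseg_graph_on n E"
  then obtain lab where length: "\<forall>v\<in>{1..n}. length (lab v) = 2 + 2 * code_width n"
    and adj: "\<forall>u\<in>{1..n}. \<forall>v\<in>{1..n}. u \<noteq> v \<longrightarrow> ((u, v) \<in> E \<longleftrightarrow> ipseg_adjacent (lab u) (lab v))"
    by (blast dest: ipseg_graph_on_implicit_representation)
  have "real (length (lab v)) \<le> 8 * log 2 (real n + 1)" if "v \<in> {1..n}" for v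
    using length label_length_le_log[of n] that by simp
  with adj show "\<exists>lab. (\<forall>v\<in>{1..n}. real (length (lab v)) \<le> 8 * log 2 (real n + 1)) \<and>
      (\<forall>u\<in>{1..n}. \<forall>v\<in>{1..n}. u \<noteq> v \<longrightarrow> ((u, v) \<in> E \<longleftrightarrow> ipseg_adjacent (lab u) (lab v)))"
    by blast
qed simp

end
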